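(* Let $\mathcal{C}$ be a finite or countable alphabet with letter probabilities $(p_\alpha)_{\alpha\in\mathcal{C}}$, $0<p_\alpha<1$, $\sum_\alpha p_\alpha=1$, and let $\mathbb{P}$ be the product measure with these identically distributed marginals. There exists a sequence $A(k)$ with $\lim_{k\to\infty}A(k)=0$ such that $a_k\ge m_2^{k+1}/(1-m_2)-A(k)$ for all positive integers $k$. Furthermore: (a) if $m_2\le 1/2$, then $m_2^k>a_k$ for all $k\in\mathbb{N}$; (b) if $m_2>1/2$, then (1) $a_1<m_2$, and (2) there exists $k_0>0$ such that $a_k>m_2^k$ for all $k>k_0$.
   Context: $\mathbb{P}(x_1^n)=\prod_{i=1}^n p_{x_i}$; $x_a^b=(x_a,\dots,x_b)$. For $1\le j\le n-1$, $R_n(j)=\{x_1^n\in\mathcal{C}^n: x_1^j=x_{n-j+1}^n\}$; unions over empty index ranges are empty. $m_q=\sum_\alpha p_\alpha^q$, and $a_k=\sum_{i=k+1}^{\infty}\mathbb{P}\Big(R_{2i}(i)\setminus\bigcup_{j=k}^{i-1}R_{2i}(j)\Big)$. *)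

theory Defs
  imports "HOL-Analysis.Analysis"
begin

definition wprob :: "('a \<Rightarrow> real) \<Rightarrow> 'a list set \<Rightarrow> real" where
  "wprob p S = infsum (\<lambda>xs. prod_list (map p xs)) S"

definition Rset :: "nat \<Rightarrow> nat \<Rightarrow> 'a list set" where
  "Rset n j = {xs. length xs = n \<and> take j xs = drop (n - j) xs}"

definition moment :: "('a \<Rightarrow> real) \<Rightarrow> nat \<Rightarrow> real" where
  "moment p q = infsum (\<lambda>a. p a ^ q) UNIV"

definition a_seq :: "('a \<Rightarrow> real) \<Rightarrow> nat \<Rightarrow> real" where
  "a_seq p k = infsum (\<lambda>i. wprob p (Rset (2*i) i - (\<Union>j\<in>{k..<i}. Rset (2*i) j))) {k<..}"

end

theory Submission
  imports Defs
begin

text \<open>The set \<open>R\<^sub>2\<^sub>i(i)\<close> consists of the squares \<open>w w\<close> with \<open>|w| = i\<close>, and \<open>w w\<close> has a border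
  of length \<open>j < i\<close> exactly when \<open>w\<close> has. Hence \<open>a\<^sub>k = \<Sum>\<^sub>i\<^sub>>\<^sub>k \<mu>(U\<^sub>k(i))\<close>, where \<open>\<mu>\<close> is the
  product measure with letter weights \<open>p\<^sub>\<alpha>\<^sup>2\<close> (so words of length \<open>i\<close> have total mass \<open>m\<^sub>2\<^sup>i\<close>)
  and \<open>U\<^sub>k(i)\<close> (\<open>unbordered k i\<close>) is the set of words of length \<open>i\<close> without a border of length in \<open>[k, i)\<close>.
  Constant words have such borders, so \<open>a\<^sub>k < m\<^sub>2\<^sup>k\<^sup>+\<^sup>1 / (1 - m\<^sub>2)\<close>, which gives (a).
  A word with a border of length \<open>j\<close> is determined by its first \<open>i - j\<close> letters, so
  \<open>\<mu>(R\<^sub>i(j)) \<le> M\<^sup>j m\<^sub>2\<^sup>i\<^sup>-\<^sup>j\<close> with \<open>M = max p\<^sub>\<alpha>\<^sup>2 < m\<^sub>2\<close>; summing over \<open>j\<close> and \<open>i\<close> gives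
  \<open>a\<^sub>k \<ge> m\<^sub>2\<^sup>k\<^sup>+\<^sup>1 / (1 - m\<^sub>2) \<cdot> (1 - r\<^sup>k / (1 - r))\<close> with \<open>r = M / m\<^sub>2\<close>, which yields the limit statement
  and (b)(2). For (b)(1), the words \<open>\<alpha> v \<alpha>\<close> of length \<open>i\<close> have mass \<open>m\<^sub>4 m\<^sub>2\<^sup>i\<^sup>-\<^sup>2\<close>, and
  \<open>2 m\<^sub>2\<^sup>2 < m\<^sub>2 + m\<^sub>4\<close>.\<close>

lemma has_sum_product_nonneg:
  fixes f :: "'a \<Rightarrow> real" and g :: "'b \<Rightarrow> real"
  assumes f: "(f has_sum a) A" and g: "(g has_sum b) B"
    and f_nonneg: "\<And>x. x \<in> A \<Longrightarrow> 0 \<le> f x" and g_nonneg: "\<And>y. y \<in> B \<Longrightarrow> 0 \<le> g y"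
  shows "((\<lambda>(x, y). f x * g y) has_sum a * b) (A \<times> B)"
proof -
  have rows: "((\<lambda>y. f x * g y) has_sum f x * b) B" for x
    using g by (rule has_sum_cmult_right)
  have "((\<lambda>x. f x * b) has_sum a * b) A"
    using f by (rule has_sum_cmult_left)
  moreover have "(\<lambda>(x, y). f x * g y) summable_on A \<times> B"
    using rows calculation f_nonneg g_nonneg
    by (intro summable_on_SigmaI[where g = "\<lambda>x. f x * b"]) (auto dest: has_sum_imp_summable)
  ultimately show ?thesis
    using rows by (intro has_sum_SigmaI[where g = "\<lambda>x. f x * b"]) auto
qed

lemma has_sum_geometric_atLeast:
  fixes x :: real
  assumes "0 \<le> x" "x < 1"
  shows "((\<lambda>i. x ^ i) has_sum x ^ k / (1 - x)) {k..}"
proof -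
  have "((\<lambda>n. x ^ n) has_sum 1 / (1 - x)) UNIV"
    using assms geometric_sums[of x] summable_geometric[of x]
    by (intro norm_summable_imp_has_sum) (auto simp: norm_power)
  from has_sum_cmult_right[OF this, of "x ^ k"]
  have "((\<lambda>n. x ^ k * x ^ n) has_sum x ^ k / (1 - x)) UNIV"
    by simp
  moreover have "((\<lambda>i. x ^ i) has_sum x ^ k / (1 - x)) {k..}
      \<longleftrightarrow> ((\<lambda>n. x ^ k * x ^ n) has_sum x ^ k / (1 - x)) UNIV"
    by (rule has_sum_reindex_bij_witness[where i = "\<lambda>n. n + k" and j = "\<lambda>i. i - k"])
       (auto simp flip: power_add)
  ultimately show ?thesis
    by simp
qed

definition word_weight :: "('a \<Rightarrow> real) \<Rightarrow> 'a list \<Rightarrow> real" where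
  "word_weight q w = prod_list (map q w)"

definition words :: "nat \<Rightarrow> 'a list set" where
  "words n = {xs. length xs = n}"

definition unbordered :: "nat \<Rightarrow> nat \<Rightarrow> 'a list set" where
  "unbordered k i = words i - (\<Union>j\<in>{k..<i}. Rset i j)"

lemma word_weight_Nil [simp]: "word_weight q [] = 1"
  and word_weight_Cons [simp]: "word_weight q (a # w) = q a * word_weight q w"
  and word_weight_append [simp]: "word_weight q (u @ v) = word_weight q u * word_weight q v"
  by (simp_all add: word_weight_def)

lemma word_weight_nonneg: "(\<And>a. 0 \<le> q a) \<Longrightarrow> 0 \<le> word_weight q w"
  by (induction w) auto

lemma word_weight_le_power:
  assumes "\<And>a. 0 \<le> q a" "\<And>a. q a \<le> M"
  shows "word_weight q w \<le> M ^ length w"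
proof (induction w)
  case (Cons a w)
  have "q a * word_weight q w \<le> M * M ^ length w"
    using Cons assms word_weight_nonneg[of q w] by (intro mult_mono) (auto intro: order_trans)
  then show ?case by simp
qed simp

lemma word_weight_replicate: "word_weight q (replicate n a) = q a ^ n"
  by (induction n) auto

lemma word_weight_power: "word_weight (\<lambda>a. q a ^ n) w = word_weight q w ^ n"
  by (induction w) (auto simp: power_mult_distrib)

lemma words_Suc: "words (Suc n) = (\<lambda>(a, v). a # v) ` (UNIV \<times> words n)"
  unfolding words_def by (auto simp: length_Suc_conv image_iff)

lemma Rset_subset_words: "Rset i j \<subseteq> words i"
  by (auto simp: Rset_def words_def)

lemma UN_Rset_subset_words: "(\<Union>j\<in>J. Rset i j) \<subseteq> words i"
  using Rset_subset_words by blast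

lemma Rset_nth_period:
  assumes "xs \<in> Rset i j" "j < i" "i - j \<le> t" "t < i"
  shows "xs ! t = xs ! (t - (i - j))"
proof -
  have "length xs = i" "take j xs = drop (i - j) xs"
    using assms(1) by (auto simp: Rset_def)
  then have "xs ! t = take j xs ! (t - (i - j))"
    using assms by simp
  then show ?thesis
    using assms by simp
qed

lemma inj_on_take_Rset:
  assumes "j < i"
  shows "inj_on (take (i - j)) (Rset i j)"
proof
  fix x y :: "'a list" assume x: "x \<in> Rset i j" and y: "y \<in> Rset i j"
    and prefix: "take (i - j) x = take (i - j) y"
  have "x ! t = y ! t" if "t < i" for t
    using that
  proof (induction t rule: less_induct)
    case (less t)
    show ?case
    proof (cases "t < i - j")
      case True
      then show ?thesis
        using arg_cong[OF prefix, of "\<lambda>xs. xs ! t"] by simp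
    next
      case False
      then have "t - (i - j) < t"
        using assms by linarith
      have "x ! t = x ! (t - (i - j))"
        using False less.prems by (intro Rset_nth_period[OF x assms]) auto
      also have "\<dots> = y ! (t - (i - j))"
        using less.IH \<open>t - (i - j) < t\<close> less.prems by simp
      also have "\<dots> = y ! t"
        using False less.prems by (intro Rset_nth_period[OF y assms, symmetric]) auto
      finally show ?thesis .
    qed
  qed
  moreover have "length x = i" "length y = i"
    using x y by (auto simp: Rset_def)
  ultimately show "x = y"
    by (intro nth_equalityI) auto
qed

lemma Rset_double: "Rset (2 * i) i = (\<lambda>w. w @ w) ` words i"
proof (intro equalityI subsetI)
  fix xs :: "'a list" assume "xs \<in> Rset (2 * i) i"
  then have "length xs = 2 * i" "xs = take i xs @ take i xs"
    by (auto simp: Rset_def) (metis append_take_drop_id)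
  then show "xs \<in> (\<lambda>w. w @ w) ` words i"
    by (auto simp: words_def image_iff intro!: exI[of _ "take i xs"])
qed (auto simp: words_def Rset_def)

lemma double_mem_Rset_iff:
  "j < i \<Longrightarrow> length w = i \<Longrightarrow> w @ w \<in> Rset (2 * i) j \<longleftrightarrow> w \<in> Rset i j"
  by (auto simp: Rset_def)

lemma inj_double: "inj (\<lambda>w :: 'a list. w @ w)"
proof (rule injI)
  fix x y :: "'a list" assume "x @ x = y @ y"
  moreover from this have "length x = length y"
    by (metis length_append mult_2 nonzero_mult_div_cancel_left zero_neq_numeral)
  ultimately show "x = y"
    by simp
qed

lemma wprob_double: "wprob p ((\<lambda>w. w @ w) ` S) = infsum (word_weight (\<lambda>a. p a ^ 2)) S"
proof -
  have "prod_list (map p (w @ w)) = word_weight (\<lambda>a. p a ^ 2) w" for w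
    unfolding word_weight_power by (simp add: word_weight_def power2_eq_square)
  then show ?thesis
    unfolding wprob_def by (subst infsum_reindex) (auto intro: inj_on_subset[OF inj_double] simp: o_def)
qed

lemma a_seq_eq_unbordered:
  "a_seq p k = infsum (\<lambda>i. infsum (word_weight (\<lambda>a. p a ^ 2)) (unbordered k i)) {k<..}"
proof -
  have "w @ w \<in> (\<Union>j\<in>{k..<i}. Rset (2 * i) j) \<longleftrightarrow> w \<in> (\<Union>j\<in>{k..<i}. Rset i j)"
    if "w \<in> words i" for w :: "'a list" and i
    using that by (simp add: words_def double_mem_Rset_iff)
  then have "Rset (2 * i) i - (\<Union>j\<in>{k..<i}. Rset (2 * i) j)
      = (\<lambda>w. w @ w) ` (unbordered k i :: 'a list set)" for i
    unfolding unbordered_def Rset_double by blast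
  then show ?thesis
    unfolding a_seq_def by (simp add: wprob_double)
qed

locale letter_weights =
  fixes q :: "'a \<Rightarrow> real" and m :: real
  assumes weight_nonneg: "\<And>a. 0 \<le> q a"
    and weight_has_sum: "(q has_sum m) UNIV"
begin

abbreviation mass :: "'a list set \<Rightarrow> real" where
  "mass S \<equiv> infsum (word_weight q) S"

lemma has_sum_words: "(word_weight q has_sum m ^ n) (words n)"
proof (induction n)
  case 0
  have "words 0 = {[] :: 'a list}"
    by (auto simp: words_def)
  then show ?case
    using has_sum_finite[of "{[]}" "word_weight q"] by simp
next
  case (Suc n)
  have inj: "inj_on (\<lambda>(a, v). a # v) (UNIV \<times> words n)"
    by (auto simp: inj_on_def)
  have weight: "word_weight q \<circ> (\<lambda>(a, v). a # v) = (\<lambda>(a, v). q a * word_weight q v)"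
    by (auto simp: fun_eq_iff)
  have "((\<lambda>(a, v). q a * word_weight q v) has_sum m * m ^ n) (UNIV \<times> words n)"
    using weight_has_sum Suc weight_nonneg word_weight_nonneg[OF weight_nonneg]
    by (intro has_sum_product_nonneg) auto
  then show ?case
    unfolding words_Suc has_sum_reindex[OF inj] weight by simp
qed

lemma summable_on_subset_words: "S \<subseteq> words n \<Longrightarrow> word_weight q summable_on S"
  by (rule summable_on_subset_banach[OF has_sum_imp_summable[OF has_sum_words]])

lemma mass_nonneg: "0 \<le> mass S"
  by (intro infsum_nonneg word_weight_nonneg weight_nonneg)

lemma mass_mono:
  assumes "S \<subseteq> T" "T \<subseteq> words n"
  shows "mass S \<le> mass T"
  using assms
  by (intro infsum_mono2 summable_on_subset_words word_weight_nonneg weight_nonneg) auto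

lemma mass_words_Diff:
  assumes "S \<subseteq> words n"
  shows "mass (words n - S) = m ^ n - mass S"
  using infsum_Diff[OF summable_on_subset_words[OF order_refl] summable_on_subset_words[OF assms] assms]
    infsumI[OF has_sum_words]
  by simp

lemma mass_UN_le:
  assumes "finite J" "\<And>j. j \<in> J \<Longrightarrow> S j \<subseteq> words n"
  shows "mass (\<Union>j\<in>J. S j) \<le> (\<Sum>j\<in>J. mass (S j))"
  using assms
proof (induction J rule: finite_induct)
  case (insert j J)
  let ?U = "\<Union>j\<in>J. S j"
  have U: "?U \<subseteq> words n" and Sj: "S j \<subseteq> words n"
    using insert.prems by auto
  have "S j \<union> ?U = S j \<union> (?U - S j)"
    by blast
  then have "mass (S j \<union> ?U) = mass (S j) + mass (?U - S j)"
    using infsum_Un_disjoint[OF summable_on_subset_words[OF Sj] summable_on_subset_words[of "?U - S j" n]] U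
    by auto
  also have "\<dots> \<le> mass (S j) + mass ?U"
    using mass_mono[OF Diff_subset U] by simp
  also have "\<dots> \<le> mass (S j) + (\<Sum>j\<in>J. mass (S j))"
    using insert by simp
  finally show ?case
    using insert.hyps by simp
qed simp

lemma mass_Rset_le:
  assumes "j < i" and M: "\<And>a. q a \<le> M"
  shows "mass (Rset i j) \<le> M ^ j * m ^ (i - j)"
proof -
  let ?R = "Rset i j :: 'a list set" and ?d = "i - j"
  have inj: "inj_on (take ?d) ?R"
    using \<open>j < i\<close> by (rule inj_on_take_Rset)
  have image: "take ?d ` ?R \<subseteq> words ?d"
    by (auto simp: Rset_def words_def)
  have "word_weight q w \<le> word_weight q (take ?d w) * M ^ j" if "w \<in> ?R" for w
  proof -
    have "word_weight q (drop ?d w) \<le> M ^ j"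
      using word_weight_le_power[OF weight_nonneg M, where w = "drop ?d w"] that assms
      by (simp add: Rset_def)
    then have "word_weight q (take ?d w) * word_weight q (drop ?d w) \<le> word_weight q (take ?d w) * M ^ j"
      by (intro mult_left_mono word_weight_nonneg weight_nonneg)
    then show ?thesis
      by (metis append_take_drop_id word_weight_append)
  qed
  then have "mass ?R \<le> infsum (\<lambda>w. word_weight q (take ?d w) * M ^ j) ?R"
    using summable_on_subset_words[OF image] summable_on_reindex[OF inj]
    by (intro infsum_mono summable_on_subset_words[OF Rset_subset_words] summable_on_cmult_left)
       (auto simp: o_def)
  also have "\<dots> = mass (take ?d ` ?R) * M ^ j"
    by (simp add: infsum_cmult_left' infsum_reindex[OF inj] o_def)
  also have "\<dots> \<le> m ^ ?d * M ^ j"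
    using mass_mono[OF image subset_refl] infsumI[OF has_sum_words] M[of undefined]
      weight_nonneg[of undefined]
    by (intro mult_right_mono) auto
  finally show ?thesis
    by (simp add: mult.commute)
qed

lemma mass_Rset_1_ge:
  assumes sq: "((\<lambda>a. q a ^ 2) has_sum s) UNIV" and "2 \<le> i"
  shows "s * m ^ (i - 2) \<le> mass (Rset i 1)"
proof -
  obtain n where i: "i = n + 2"
    using \<open>2 \<le> i\<close> by (metis le_add_diff_inverse2)
  define f where "f = (\<lambda>(a, v). a # v @ [a] :: 'a list)"
  have inj: "inj_on f (UNIV \<times> words n)"
    by (auto simp: inj_on_def f_def)
  have weight: "word_weight q \<circ> f = (\<lambda>(a, v). q a ^ 2 * word_weight q v)"
    by (auto simp: f_def fun_eq_iff power2_eq_square)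
  have "((\<lambda>(a, v). q a ^ 2 * word_weight q v) has_sum s * m ^ n) (UNIV \<times> words n)"
    using sq has_sum_words weight_nonneg word_weight_nonneg[OF weight_nonneg]
    by (intro has_sum_product_nonneg) auto
  then have "(word_weight q has_sum s * m ^ n) (f ` (UNIV \<times> words n))"
    unfolding has_sum_reindex[OF inj] weight .
  then have "mass (f ` (UNIV \<times> words n)) = s * m ^ n"
    by (rule infsumI)
  moreover have "f ` (UNIV \<times> words n) \<subseteq> Rset i 1"
    by (auto simp: i f_def words_def Rset_def)
  then have "mass (f ` (UNIV \<times> words n)) \<le> mass (Rset i 1)"
    by (rule mass_mono[OF _ Rset_subset_words])
  ultimately show ?thesis
    by (simp add: i)
qed

lemma mass_unbordered: "mass (unbordered k i) = m ^ i - mass (\<Union>j\<in>{k..<i}. Rset i j)"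
  unfolding unbordered_def by (rule mass_words_Diff[OF UN_Rset_subset_words])

lemma mass_unbordered_le: "mass (unbordered k i) \<le> m ^ i"
  using mass_unbordered mass_nonneg by simp

lemma mass_unbordered_le_replicate:
  assumes "k < i"
  shows "mass (unbordered k i) \<le> m ^ i - q a ^ i"
proof -
  have "replicate i a \<in> (\<Union>j\<in>{k..<i}. Rset i j)"
    using assms by (auto simp: Rset_def)
  then have "mass {replicate i a} \<le> mass (\<Union>j\<in>{k..<i}. Rset i j)"
    by (intro mass_mono[OF _ UN_Rset_subset_words]) auto
  then show ?thesis
    by (simp add: mass_unbordered word_weight_replicate)
qed

lemma mass_unbordered_1_le:
  assumes "((\<lambda>a. q a ^ 2) has_sum s) UNIV" and "2 \<le> i"
  shows "mass (unbordered 1 i) \<le> m ^ i - s * m ^ (i - 2)"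
proof -
  have "mass (Rset i 1) \<le> mass (\<Union>j\<in>{1..<i}. Rset i j)"
    using \<open>2 \<le> i\<close> by (intro mass_mono[OF _ UN_Rset_subset_words]) (auto intro!: bexI[of _ 1])
  then show ?thesis
    using mass_Rset_1_ge[OF assms] by (simp add: mass_unbordered)
qed

lemma mass_unbordered_ge:
  assumes "\<And>a. q a \<le> M"
  shows "m ^ i - (\<Sum>j\<in>{k..<i}. M ^ j * m ^ (i - j)) \<le> mass (unbordered k i)"
proof -
  have "mass (\<Union>j\<in>{k..<i}. Rset i j) \<le> (\<Sum>j\<in>{k..<i}. mass (Rset i j))"
    using Rset_subset_words by (intro mass_UN_le) auto
  also have "\<dots> \<le> (\<Sum>j\<in>{k..<i}. M ^ j * m ^ (i - j))"
    using assms by (intro sum_mono mass_Rset_le) auto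
  finally show ?thesis
    by (simp add: mass_unbordered)
qed

lemma mass_unbordered_ge_geometric:
  assumes "M < m" and bound: "\<And>a. q a \<le> M"
  shows "m ^ i * (1 - (M / m) ^ k / (1 - M / m)) \<le> mass (unbordered k i)"
proof -
  have "0 \<le> M"
    using bound[of undefined] weight_nonneg[of undefined] by linarith
  with \<open>M < m\<close> have "0 < m"
    by linarith
  define r where "r = M / m"
  have r: "0 \<le> r" "r < 1"
    using \<open>0 \<le> M\<close> \<open>M < m\<close> by (auto simp: r_def)
  have "M ^ j * m ^ (i - j) = m ^ i * r ^ j" if "j < i" for j
  proof -
    have "m ^ i = m ^ j * m ^ (i - j)"
      using that by (simp flip: power_add)
    then show ?thesis
      using \<open>0 < m\<close> by (simp add: r_def power_divide)
  qed
  then have "(\<Sum>j\<in>{k..<i}. M ^ j * m ^ (i - j)) = m ^ i * (\<Sum>j\<in>{k..<i}. r ^ j)"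
    by (simp add: sum_distrib_left)
  also have "\<dots> \<le> m ^ i * (r ^ k / (1 - r))"
  proof (rule mult_left_mono)
    show "(\<Sum>j\<in>{k..<i}. r ^ j) \<le> r ^ k / (1 - r)"
      by (rule finite_sum_le_has_sum[OF has_sum_geometric_atLeast[OF r]]) (use r in auto)
  qed (use \<open>0 < m\<close> in simp)
  finally show ?thesis
    using mass_unbordered_ge[OF bound, of i k] by (simp add: r_def right_diff_distrib)
qed

end

locale letter_distribution =
  fixes p :: "'a \<Rightarrow> real"
  assumes prob_pos: "\<And>a. 0 < p a"
    and prob_less_1: "\<And>a. p a < 1"
    and prob_has_sum: "(p has_sum 1) UNIV"
begin

lemma has_sum_power: "1 \<le> n \<Longrightarrow> ((\<lambda>a. p a ^ n) has_sum moment p n) UNIV"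
proof -
  assume "1 \<le> n"
  have "p a ^ n \<le> p a" for a
    using power_decreasing[OF \<open>1 \<le> n\<close>, of "p a"] prob_pos[of a] prob_less_1[of a] by simp
  then have "(\<lambda>a. p a ^ n) summable_on UNIV"
    using prob_pos by (intro summable_on_comparison_test[OF has_sum_imp_summable[OF prob_has_sum]])
      (auto intro: less_imp_le)
  then show ?thesis
    by (simp add: moment_def)
qed

sublocale letter_weights "\<lambda>a. p a ^ 2" "moment p 2"
  by unfold_locales (simp_all add: has_sum_power)

lemma power_le_moment: "1 \<le> n \<Longrightarrow> p a ^ n \<le> moment p n"
  using finite_sum_le_has_sum[OF has_sum_power, of n "{a}"] by (simp add: less_imp_le[OF prob_pos])

lemma moment_pos: "1 \<le> n \<Longrightarrow> 0 < moment p n"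
  using power_le_moment[of n undefined] prob_pos[of undefined] by (meson order_less_le_trans zero_less_power)

lemma moment_less_1: "2 \<le> n \<Longrightarrow> moment p n < 1"
proof (rule has_sum_strict_mono[OF has_sum_power prob_has_sum])
  assume "2 \<le> n"
  show "p a ^ n \<le> p a" for a
    using power_decreasing[of 1 n "p a"] prob_pos[of a] prob_less_1[of a] \<open>2 \<le> n\<close> by simp
  show "p undefined ^ n < p undefined"
    using power_strict_decreasing[of 1 n "p undefined"] prob_pos prob_less_1 \<open>2 \<le> n\<close> by simp
qed auto

text \<open>There are at least two letters, so the largest \<open>p\<^sup>2\<close> stays uniformly below \<open>m\<^sub>2\<close>.\<close>
lemma sq_prob_bound_less_moment:
  obtains M where "M < moment p 2" "\<And>a. p a ^ 2 \<le> M"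
proof -
  have "\<exists>a b :: 'a. a \<noteq> b"
  proof (rule ccontr)
    assume "\<nexists>a b :: 'a. a \<noteq> b"
    then have "UNIV = {undefined :: 'a}"
      by auto
    moreover have "(p has_sum p undefined) {undefined}"
      using has_sum_finite[of "{undefined}" p] by simp
    ultimately have "(p has_sum p undefined) UNIV"
      by simp
    then have "p undefined = 1"
      using prob_has_sum has_sum_unique by blast
    then show False
      using prob_less_1[of undefined] by simp
  qed
  then obtain a b :: 'a where "a \<noteq> b"
    by blast
  have pair: "p x ^ 2 + p y ^ 2 \<le> moment p 2" if "x \<noteq> y" for x y
    using finite_sum_le_has_sum[OF has_sum_power, of 2 "{x, y}"] that by (simp add: less_imp_le[OF prob_pos])
  define d where "d = min (p a ^ 2) (p b ^ 2)"
  have "p x ^ 2 \<le> moment p 2 - d" for x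
    using pair[of x a] pair[of x b] \<open>a \<noteq> b\<close> by (cases "x = a") (auto simp: d_def)
  moreover have "0 < d"
    using prob_pos[of a] prob_pos[of b] by (simp add: d_def)
  ultimately show ?thesis
    by (intro that[of "moment p 2 - d"]) auto
qed

text \<open>Sum \<open>p\<^sup>2 (1 - p)\<^sup>2 + 2 p (p - m\<^sub>2)\<^sup>2 > 0\<close> over all letters.\<close>
lemma moment_4_gt: "2 * moment p 2 ^ 2 < moment p 2 + moment p 4"
proof -
  define m where "m = moment p 2"
  define f where "f a = p a ^ 2 + p a ^ 4 + (-4 * m) * p a ^ 2 + (2 * m ^ 2) * p a" for a
  have sq: "((\<lambda>a. p a ^ 2) has_sum m) UNIV" and fourth: "((\<lambda>a. p a ^ 4) has_sum moment p 4) UNIV"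
    using has_sum_power[of 2] has_sum_power[of 4] by (simp_all add: m_def)
  have hs: "(f has_sum m + moment p 4 + (-4 * m) * m + (2 * m ^ 2) * 1) UNIV"
    unfolding f_def by (intro has_sum_add sq fourth has_sum_cmult_right prob_has_sum)
  have f_pos: "0 < f a" for a
  proof -
    have "f a = p a ^ 2 * (1 - p a) ^ 2 + 2 * p a * (p a - m) ^ 2"
      by (simp add: f_def eval_nat_numeral algebra_simps)
    moreover have "0 < p a ^ 2 * (1 - p a) ^ 2"
      using prob_pos[of a] prob_less_1[of a] by simp
    moreover have "0 \<le> 2 * p a * (p a - m) ^ 2"
      using prob_pos[of a] by simp
    ultimately show ?thesis
      by linarith
  qed
  have "0 < m + moment p 4 + (-4 * m) * m + (2 * m ^ 2) * 1"
    by (rule has_sum_strict_mono[OF has_sum_0_simp hs, where x = undefined]) (simp_all add: less_imp_le f_pos)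
  then show ?thesis
    by (simp add: m_def power2_eq_square)
qed

lemma has_sum_moment_powers:
  "((\<lambda>i. moment p 2 ^ i) has_sum moment p 2 ^ Suc k / (1 - moment p 2)) {k<..}"
  using has_sum_geometric_atLeast[of "moment p 2" "Suc k"] moment_pos[of 2] moment_less_1[of 2]
  by (simp add: atLeast_Suc_greaterThan)

lemma has_sum_a_seq: "((\<lambda>i. mass (unbordered k i)) has_sum a_seq p k) {k<..}"
proof -
  have "(\<lambda>i. mass (unbordered k i)) summable_on {k<..}"
    using has_sum_imp_summable[OF has_sum_moment_powers]
    by (rule summable_on_comparison_test) (simp_all add: mass_unbordered_le mass_nonneg)
  then show ?thesis
    by (simp add: a_seq_eq_unbordered)
qed

lemma a_seq_less: "a_seq p k < moment p 2 ^ Suc k / (1 - moment p 2)"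
proof (rule has_sum_strict_mono[OF has_sum_a_seq has_sum_moment_powers])
  show "mass (unbordered k i) \<le> moment p 2 ^ i" for i
    by (rule mass_unbordered_le)
  have "0 < (p undefined ^ 2) ^ Suc k"
    using prob_pos[of undefined] by simp
  then show "mass (unbordered k (Suc k)) < moment p 2 ^ Suc k"
    using mass_unbordered_le_replicate[of k "Suc k" undefined] by linarith
qed auto

lemma a_seq_1_less: "a_seq p 1 < moment p 2"
proof -
  define m where "m = moment p 2"
  define c where "c = moment p 4 / m ^ 2"
  have m: "0 < m" "m < 1"
    using moment_pos[of 2] moment_less_1[of 2] by (simp_all add: m_def)
  have fourth: "((\<lambda>a. (p a ^ 2) ^ 2) has_sum moment p 4) UNIV"
    using has_sum_power[of 4] by (simp flip: power_mult)
  have "mass (unbordered 1 i) \<le> (1 - c) * m ^ i" if "i \<in> {1<..}" for i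
  proof -
    have "2 + (i - 2) = i"
      using that by simp
    then have "m ^ i = m ^ 2 * m ^ (i - 2)"
      by (metis power_add)
    then have "c * m ^ i = moment p 4 * m ^ (i - 2)"
      using m by (simp add: c_def)
    then show ?thesis
      using mass_unbordered_1_le[OF fourth, of i] that by (simp add: m_def left_diff_distrib)
  qed
  then have "a_seq p 1 \<le> (1 - c) * (m ^ 2 / (1 - m))"
    using has_sum_cmult_right[OF has_sum_moment_powers[of 1], of "1 - c"]
    by (intro has_sum_mono[OF has_sum_a_seq]) (simp_all add: m_def power2_eq_square)
  also have "\<dots> = (m ^ 2 - moment p 4) / (1 - m)"
    using m by (simp add: c_def field_simps)
  also have "\<dots> < m"
    using moment_4_gt m by (simp add: m_def pos_divide_less_eq power2_eq_square algebra_simps)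
  finally show ?thesis
    by (simp add: m_def)
qed

lemma a_seq_less_power:
  assumes "moment p 2 \<le> 1 / 2"
  shows "a_seq p k < moment p 2 ^ k"
proof -
  define m where "m = moment p 2"
  have m: "0 < m" "m < 1" "m \<le> 1 - m"
    using assms moment_pos[of 2] moment_less_1[of 2] by (simp_all add: m_def)
  have "m * m ^ k \<le> (1 - m) * m ^ k"
    using m by (intro mult_right_mono) simp_all
  then have "m ^ Suc k / (1 - m) \<le> m ^ k"
    using m by (simp add: pos_divide_le_eq mult.commute)
  then show ?thesis
    using a_seq_less[of k] by (simp add: m_def)
qed

lemma a_seq_ge_geometric:
  obtains r where "0 \<le> r" "r < 1"
    "\<And>k. moment p 2 ^ Suc k / (1 - moment p 2) * (1 - r ^ k / (1 - r)) \<le> a_seq p k"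
proof -
  obtain M where M: "M < moment p 2" "\<And>a. p a ^ 2 \<le> M"
    using sq_prob_bound_less_moment by blast
  have m: "0 < moment p 2"
    using moment_pos[of 2] by simp
  have "0 \<le> M"
    using M(2)[of undefined] by (meson order_trans zero_le_power2)
  show ?thesis
  proof (rule that[of "M / moment p 2"])
    show "0 \<le> M / moment p 2" "M / moment p 2 < 1"
      using \<open>0 \<le> M\<close> M m by simp_all
    show "moment p 2 ^ Suc k / (1 - moment p 2) * (1 - (M / moment p 2) ^ k / (1 - M / moment p 2))
        \<le> a_seq p k" for k
      by (intro has_sum_mono[OF has_sum_cmult_left[OF has_sum_moment_powers] has_sum_a_seq]
          mass_unbordered_ge_geometric M)
  qed
qed

lemma a_seq_lower_bound:
  "\<exists>A. A \<longlonglongrightarrow> 0 \<and> (\<forall>k. moment p 2 ^ (k + 1) / (1 - moment p 2) - A k \<le> a_seq p k)"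
proof -
  obtain r where r: "0 \<le> r" "r < 1"
    and bound: "\<And>k. moment p 2 ^ Suc k / (1 - moment p 2) * (1 - r ^ k / (1 - r)) \<le> a_seq p k"
    using a_seq_ge_geometric by blast
  define A where "A k = moment p 2 ^ Suc k / (1 - moment p 2) * (r ^ k / (1 - r))" for k
  have m: "0 < moment p 2" "moment p 2 < 1"
    using moment_pos[of 2] moment_less_1[of 2] by simp_all
  then have "(\<lambda>k. moment p 2 ^ k) \<longlonglongrightarrow> 0" "(\<lambda>k. r ^ k) \<longlonglongrightarrow> 0"
    using r by (simp_all add: LIMSEQ_power_zero)
  then have "A \<longlonglongrightarrow> moment p 2 * 0 / (1 - moment p 2) * (0 / (1 - r))"
    unfolding A_def power_Suc using m r by (intro tendsto_intros) auto
  then have "A \<longlonglongrightarrow> 0"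
    by simp
  moreover have "moment p 2 ^ (k + 1) / (1 - moment p 2) - A k \<le> a_seq p k" for k
    using bound[of k] by (simp add: A_def right_diff_distrib)
  ultimately show ?thesis
    by blast
qed

lemma eventually_power_less_a_seq:
  assumes "1 / 2 < moment p 2"
  shows "\<forall>\<^sub>F k in sequentially. moment p 2 ^ k < a_seq p k"
proof -
  define m where "m = moment p 2"
  obtain r where r: "0 \<le> r" "r < 1"
    and bound: "\<And>k. m ^ Suc k / (1 - m) * (1 - r ^ k / (1 - r)) \<le> a_seq p k"
    using a_seq_ge_geometric unfolding m_def by blast
  have m: "1 / 2 < m" "m < 1"
    using assms moment_less_1[of 2] by (simp_all add: m_def)
  have "(\<lambda>k. m / (1 - m) * (1 - r ^ k / (1 - r))) \<longlonglongrightarrow> m / (1 - m) * (1 - 0 / (1 - r))"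
    using r by (intro tendsto_intros LIMSEQ_power_zero) auto
  moreover have "1 < m / (1 - m) * (1 - 0 / (1 - r))"
    using m by (simp add: pos_less_divide_eq)
  ultimately have "\<forall>\<^sub>F k in sequentially. 1 < m / (1 - m) * (1 - r ^ k / (1 - r))"
    by (rule order_tendstoD)
  then show ?thesis
  proof (rule eventually_mono)
    fix k assume "1 < m / (1 - m) * (1 - r ^ k / (1 - r))"
    moreover have "0 < m ^ k"
      using m by simp
    ultimately have "m ^ k < m ^ k * (m / (1 - m) * (1 - r ^ k / (1 - r)))"
      using mult_strict_left_mono by fastforce
    also have "\<dots> = m ^ Suc k / (1 - m) * (1 - r ^ k / (1 - r))"
      by (simp add: ac_simps)
    also have "\<dots> \<le> a_seq p k"
      by (rule bound)
    finally show "moment p 2 ^ k < a_seq p k"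
      by (simp add: m_def)
  qed
qed

end

theorem proposition2:
  fixes p :: "'a::countable \<Rightarrow> real"
  assumes pos: "\<And>a. 0 < p a" and lt1: "\<And>a. p a < 1"
    and tot: "(p has_sum 1) UNIV"
  shows "(\<exists>A :: nat \<Rightarrow> real. A \<longlonglongrightarrow> 0 \<and>
            (\<forall>k\<ge>1. a_seq p k \<ge> moment p 2 ^ (k+1) / (1 - moment p 2) - A k))
       \<and> (moment p 2 \<le> 1/2 \<longrightarrow> (\<forall>k\<ge>1. moment p 2 ^ k > a_seq p k))
       \<and> (moment p 2 > 1/2 \<longrightarrow>
            a_seq p 1 < moment p 2 \<and> (\<exists>k0>0. \<forall>k>k0. a_seq p k > moment p 2 ^ k))"
proof -
  interpret letter_distribution p
    using pos lt1 tot by unfold_locales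
  have "\<exists>k0>0. \<forall>k>k0. a_seq p k > moment p 2 ^ k" if large: "moment p 2 > 1/2"
  proof -
    obtain N where "\<And>k. N \<le> k \<Longrightarrow> moment p 2 ^ k < a_seq p k"
      using eventually_power_less_a_seq[OF large] by (auto simp: eventually_sequentially)
    then show ?thesis
      by (intro exI[of _ "Suc N"]) auto
  qed
  then show ?thesis
    using a_seq_lower_bound a_seq_less_power a_seq_1_less by blast
qed

end
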